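(* Let $n_0$ be a positive integer and let $X,Y$ be complex linear spaces. A mapping $f:X\to Y$ satisfies $$f(2\mu x+\mu y)+f(\mu x+2\mu y)=\mu[f(3x)+f(3y)]$$ for all $x,y\in X$ and all $\mu\in\mathbb{T}^1_{n_0}$ if and only if $f$ is $\mathbb{C}$-linear.
   Context: $\mathbb{T}^1_{n_0}:=\{e^{i\theta}: 0\le\theta\le 2\pi/n_0\}$. *)

theory Defs
  imports "HOL-Analysis.Analysis"
begin

definition arcT :: "nat \<Rightarrow> complex set" where
  "arcT n0 = {cis \<theta> | \<theta>. 0 \<le> \<theta> \<and> \<theta> \<le> 2 * pi / real n0}"

end

theory Submission
  imports Defs
begin

text \<open>
  Taking \<open>\<mu> = 1\<close> gives the Jensen-type equation
  \<open>f (2x + y) + f (x + 2y) = f (3x) + f (3y)\<close>; taking \<open>y = 0\<close> and comparing with the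
  case \<open>\<mu> = 1\<close> shows \<open>f (\<mu> z) = \<mu> f z\<close> for \<open>\<mu>\<close> on the arc, once \<open>f 0 = 0\<close>.
  The \<open>n\<^sub>0\<close>-th powers of the arc cover the whole unit circle, so \<open>f\<close> commutes with all
  unimodular scalars; in particular \<open>f\<close> is odd, and an odd solution of the Jensen-type
  equation is additive. Since every complex number is a natural multiple of a sum of two
  unimodular numbers, additivity and unimodular homogeneity give \<open>\<complex>\<close>-linearity.
\<close>

lemma odd_solution_additive:
  fixes s1 :: "'f::field_char_0 \<Rightarrow> 'a::ab_group_add \<Rightarrow> 'a"
    and s2 :: "'f \<Rightarrow> 'b::ab_group_add \<Rightarrow> 'b"
    and f :: "'a \<Rightarrow> 'b"
  assumes "vector_space s1" and "vector_space s2"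
    and eq: "\<And>x y. f (s1 2 x + y) + f (x + s1 2 y) = f (s1 3 x) + f (s1 3 y)"
    and odd: "\<And>z. f (- z) = - f z"
  shows "f (a + b) = f a + f b"
proof -
  interpret X: vector_space s1 by fact
  interpret Y: vector_space s2 by fact
  have twice: "v + v = s2 2 v" for v
    using Y.scale_left_distrib[of 1 1] by simp
  have f0: "f 0 = 0"
    using odd[of 0] twice[of "f 0"] by (simp add: eq_neg_iff_add_eq_0)
  have double: "f (s1 2 u) = s2 2 (f u)" for u
  proof -
    have "f u + f 0 = f (s1 2 u) + f (- u)"
      using eq[of "s1 (2/3) u" "s1 (-1/3) u"]
      by (simp add: X.scale_left_distrib[symmetric] X.scale_left_diff_distrib[symmetric])
    then show ?thesis using f0 odd twice by (metis add_0 diff_eq_eq diff_minus_eq_add add_0_right)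
  qed
  have triple: "f (s1 3 u) = s2 3 (f u)" for u
    using eq[of u 0] f0 double Y.scale_left_distrib[of 2 1 "f u"] by simp
  have shifted: "f (s1 2 p + q) = s2 2 (f p) + f q" for p q
  proof -
    let ?A = "f (s1 2 p + q)" and ?B = "f (p + s1 2 q)"
    have sum: "?A + ?B = s2 3 (f p) + s2 3 (f q)"
      using eq[of p q] triple by simp
    \<comment> \<open>The substitution \<open>x = (2p + q)/3\<close>, \<open>y = -(p + 2q)/3\<close> maps \<open>(2x + y, x + 2y)\<close> to \<open>(p, -q)\<close>.\<close>
    have "s1 2 (s1 (1/3) (s1 2 p + q)) + s1 (-1/3) (p + s1 2 q) = p"
      and "s1 (1/3) (s1 2 p + q) + s1 2 (s1 (-1/3) (p + s1 2 q)) = - q"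
      using X.scale_left_distrib[of 1 "1/3" p] X.scale_left_distrib[of 1 "1/3" q]
      by (simp_all add: X.scale_right_distrib X.scale_left_distrib[symmetric] algebra_simps)
    then have "f p + f (- q) = ?A + f (- (p + s1 2 q))"
      using eq[of "s1 (1/3) (s1 2 p + q)" "s1 (-1/3) (p + s1 2 q)"] by simp
    then have "f p + - f q = ?A + - ?B"
      by (simp only: odd)
    then have diff: "?A - ?B = f p - f q"
      by (simp add: algebra_simps)
    have "s2 2 ?A = (?A + ?B) + (?A - ?B)"
      using twice by (simp add: algebra_simps)
    also have "\<dots> = s2 (3 + 1) (f p) + s2 (3 - 1) (f q)"
      unfolding sum diff Y.scale_left_distrib Y.scale_left_diff_distrib by simp
    also have "\<dots> = s2 2 (s2 2 (f p) + f q)"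
      by (simp add: Y.scale_right_distrib)
    finally have "s2 2 ?A = s2 2 (s2 2 (f p) + f q)" .
    then show ?thesis by simp
  qed
  have "a = s1 2 (s1 (1/2) a)" by simp
  then show ?thesis by (metis shifted double)
qed

lemma additive_scale_of_nat:
  fixes s1 :: "'f::field \<Rightarrow> 'a::ab_group_add \<Rightarrow> 'a"
    and s2 :: "'f \<Rightarrow> 'b::ab_group_add \<Rightarrow> 'b"
  assumes "vector_space s1" and "vector_space s2"
    and add: "\<And>x y. f (x + y) = f x + f y"
  shows "f (s1 (of_nat n) x) = s2 (of_nat n) (f x)"
proof -
  interpret X: vector_space s1 by fact
  interpret Y: vector_space s2 by fact
  have "f 0 = 0" using add[of 0 0] by simp
  then show ?thesis
    by (induction n) (simp_all add: X.scale_left_distrib Y.scale_left_distrib add)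
qed

lemma sum_of_two_cis:
  assumes "cmod d \<le> 2"
  obtains s t where "d = cis s + cis t"
proof
  define a where "a = arccos (cmod d / 2)"
  have "cos a = cmod d / 2"
    unfolding a_def using assms norm_ge_zero[of d] by (intro cos_arccos) linarith+
  then have "complex_of_real (cmod d) = cis a + cis (- a)"
    by (simp add: complex_eq_iff)
  moreover have "d = complex_of_real (cmod d) * cis (Arg d)"
    using rcis_cmod_Arg[of d] by (simp add: rcis_def)
  ultimately show "d = cis (a + Arg d) + cis (- a + Arg d)"
    by (simp add: distrib_right cis_mult)
qed

lemma complex_of_nat_mult_sum_of_two_cis:
  fixes c :: complex
  obtains n s t where "c = of_nat n * (cis s + cis t)"
proof -
  define n where "n = nat \<lceil>cmod c\<rceil> + 1"
  have "cmod c \<le> real n" and "n > 0" unfolding n_def by linarith+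
  then have "cmod (c / of_nat n) \<le> 2" by (simp add: norm_divide divide_le_eq)
  then obtain s t where "c / of_nat n = cis s + cis t" by (rule sum_of_two_cis)
  with \<open>n > 0\<close> have "c = of_nat n * (cis s + cis t)" by (simp add: field_simps)
  then show thesis by (rule that)
qed

lemma linear_if_additive_and_cis_homogeneous:
  fixes s1 :: "complex \<Rightarrow> 'a::ab_group_add \<Rightarrow> 'a"
    and s2 :: "complex \<Rightarrow> 'b::ab_group_add \<Rightarrow> 'b"
  assumes "vector_space s1" and "vector_space s2"
    and add: "\<And>x y. f (x + y) = f x + f y"
    and cis: "\<And>t x. f (s1 (cis t) x) = s2 (cis t) (f x)"
  shows "Vector_Spaces.linear s1 s2 f"
proof -
  interpret X: vector_space s1 by fact
  interpret Y: vector_space s2 by fact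
  have "f (s1 c x) = s2 c (f x)" for c x
  proof -
    obtain n s t where c: "c = of_nat n * (cis s + cis t)"
      by (rule complex_of_nat_mult_sum_of_two_cis)
    have "f (s1 c x) = f (s1 (of_nat n) (s1 (cis s) x + s1 (cis t) x))"
      unfolding c by (simp only: X.scale_scale[symmetric] X.scale_left_distrib)
    also have "\<dots> = s2 (of_nat n) (s2 (cis s) (f x) + s2 (cis t) (f x))"
      using assms by (simp add: additive_scale_of_nat)
    finally show ?thesis
      unfolding c by (simp only: Y.scale_scale[symmetric] Y.scale_left_distrib)
  qed
  with assms show ?thesis unfolding Vector_Spaces.linear_iff by blast
qed

lemma one_in_arcT: "1 \<in> arcT n0"
  unfolding arcT_def by (auto intro!: exI[of _ 0])

lemma arcT_power_eq_cis:
  assumes "n0 > 0"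
  obtains \<mu> where "\<mu> \<in> arcT n0" and "\<mu> ^ n0 = cis t"
proof
  define s where "s = 2 * pi * frac (t / (2 * pi))"
  have s: "0 \<le> s" "s \<le> 2 * pi"
    unfolding s_def using frac_lt_1[of "t / (2 * pi)"] by (auto simp: frac_ge_0)
  show "cis (s / n0) \<in> arcT n0"
    unfolding arcT_def using assms s by (auto intro!: exI[of _ "s / n0"] simp: divide_right_mono)
  have "t = s + 2 * pi * of_int \<lfloor>t / (2 * pi)\<rfloor>"
    unfolding s_def frac_def by (simp add: algebra_simps)
  then have "cis t = cis s"
    by (metis cis_mult cis_multiple_2pi Ints_of_int mult.right_neutral)
  with assms show "cis (s / n0) ^ n0 = cis t" by (simp add: Complex.DeMoivre)
qed

lemma linear_if_arc_equation:
  fixes s1 :: "complex \<Rightarrow> 'a::ab_group_add \<Rightarrow> 'a"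
    and s2 :: "complex \<Rightarrow> 'b::ab_group_add \<Rightarrow> 'b"
  assumes "n0 > 0" and "vector_space s1" and "vector_space s2"
    and eq: "\<And>x y \<mu>. \<mu> \<in> arcT n0 \<Longrightarrow>
      f (s1 (2 * \<mu>) x + s1 \<mu> y) + f (s1 \<mu> x + s1 (2 * \<mu>) y) = s2 \<mu> (f (s1 3 x) + f (s1 3 y))"
  shows "Vector_Spaces.linear s1 s2 f"
proof -
  interpret X: vector_space s1 by fact
  interpret Y: vector_space s2 by fact
  have jensen: "f (s1 2 x + y) + f (x + s1 2 y) = f (s1 3 x) + f (s1 3 y)" for x y
    using eq[OF one_in_arcT] by simp
  obtain \<nu> where \<nu>: "\<nu> \<in> arcT n0" "\<nu> ^ n0 = -1"
    using arcT_power_eq_cis[OF \<open>n0 > 0\<close>, of pi] by auto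
  have f0: "f 0 = 0"
  proof -
    have "\<nu> \<noteq> 1" using \<nu>(2) by auto
    have "f 0 + f 0 = s2 \<nu> (f 0 + f 0)"
      using eq[OF \<nu>(1), of 0 0] by simp
    then have "s2 (1 - \<nu>) (f 0 + f 0) = 0"
      by (simp add: Y.scale_left_diff_distrib)
    with \<open>\<nu> \<noteq> 1\<close> have "s2 2 (f 0) = 0"
      using Y.scale_left_distrib[of 1 1] by simp
    then show ?thesis by simp
  qed
  have arc: "f (s1 \<mu> z) = s2 \<mu> (f z)" if "\<mu> \<in> arcT n0" for \<mu> z
    using eq[OF that, of "s1 (1/3) z" 0] jensen[of "s1 \<mu> (s1 (1/3) z)" 0] f0
    by (simp add: mult.commute)
  have arc_power: "f (s1 (\<mu> ^ k) z) = s2 (\<mu> ^ k) (f z)" if "\<mu> \<in> arcT n0" for \<mu> k z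
    by (induction k) (simp_all add: arc[OF that] flip: X.scale_scale Y.scale_scale)
  have cis: "f (s1 (cis t) z) = s2 (cis t) (f z)" for t z
  proof -
    obtain \<mu> where "\<mu> \<in> arcT n0" "\<mu> ^ n0 = cis t"
      using arcT_power_eq_cis[OF \<open>n0 > 0\<close>] .
    with arc_power show ?thesis by metis
  qed
  have "f (- z) = - f z" for z
    using cis[of pi z] by simp
  with assms jensen have "f (x + y) = f x + f y" for x y
    by (intro odd_solution_additive) auto
  with assms cis show ?thesis
    by (intro linear_if_additive_and_cis_homogeneous)
qed

lemma linear_satisfies_equation:
  assumes "Vector_Spaces.linear s1 s2 f"
  shows "f (s1 (2 * \<mu>) x + s1 \<mu> y) + f (s1 \<mu> x + s1 (2 * \<mu>) y) = s2 \<mu> (f (s1 3 x) + f (s1 3 y))"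
proof -
  interpret Vector_Spaces.linear s1 s2 f by fact
  have thrice: "s2 (\<mu> * 3) v = s2 (\<mu> * 2) v + s2 \<mu> v" for v
    using vs2.scale_left_distrib[of "\<mu> * 2" \<mu> v] by (simp add: algebra_simps)
  show ?thesis
    by (simp add: add scale vs2.scale_right_distrib thrice algebra_simps)
qed

theorem lemma2p9:
  fixes n0 :: nat
    and scaleX :: "complex \<Rightarrow> 'a::ab_group_add \<Rightarrow> 'a"
    and scaleY :: "complex \<Rightarrow> 'b::ab_group_add \<Rightarrow> 'b"
    and f :: "'a \<Rightarrow> 'b"
  assumes "n0 > 0"
    and "vector_space scaleX"
    and "vector_space scaleY"
  shows "(\<forall>x y. \<forall>\<mu>\<in>arcT n0.
            f (scaleX (2 * \<mu>) x + scaleX \<mu> y) + f (scaleX \<mu> x + scaleX (2 * \<mu>) y)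
              = scaleY \<mu> (f (scaleX 3 x) + f (scaleX 3 y)))
         \<longleftrightarrow> Vector_Spaces.linear scaleX scaleY f"
  using assms linear_if_arc_equation[of n0 scaleX scaleY f] linear_satisfies_equation[of scaleX scaleY f]
  by blast

end
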